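(* Assume the standing hypotheses on $H$ (Conditions A, B, C, in particular $\Lambda^{\sup}<\infty$; no assumption on $\Lambda^{\inf}$) and suppose $k>1$. Let $0<T<\infty$, let $h:\mathbb{R}^n\to\mathbb{R}$ be continuous with $\inf_{\mathbb{R}^n}h>-\infty$, let $\chi:(0,T)\to\mathbb{R}$ be bounded and continuous, let $\sigma\ge0$, and let $Z:\mathbb{R}\to[0,\infty)$ be non-increasing and continuous. Let $u$ be lower semicontinuous on $\mathbb{R}^n\times[0,T)$, be a viscosity super-solution of $\mathcal{P}_\sigma(t,u,u_t,Du,D^2u)\le 0$ in $\mathbb{R}^n_T$, and satisfy $u(x,0)\ge h(x)$ for all $x$. Fix $z\in\mathbb{R}^n$ and suppose $\sup_{B^R_T}(-u)=o(R^\beta)$ as $R\to\infty$. (a) If $0\le\sigma\le\gamma/2$ and $\beta=\gamma^*$, then for all $(x,t)\in\mathbb{R}^n_T$: $u(x,t)\ge\inf_{\mathbb{R}^n}h-t\sup_{(0,T)}|\chi|$ when $\sigma=0$, and $u(x,t)\ge\inf_{\mathbb{R}^n}h$ when $0<\sigma\le\gamma/2$. (b) If $\sigma>\gamma/2$ and $\beta=\sigma^*$, then $u(x,t)\ge\inf_{\mathbb{R}^n}h$ for all $(x,t)\in\mathbb{R}^n_T$.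
   Context: Let $n\ge2$, let $S^{n\times n}$ denote the real symmetric $n\times n$ matrices with the usual partial order, $I$ the identity, $O$ the zero matrix, and for a unit vector $e$ let $(e\otimes e)_{ij}=e_ie_j$. $H:\mathbb{R}^n\times S^{n\times n}\to\mathbb{R}$ is continuous and satisfies: Condition A: $H(q,X)\le H(q,Y)$ whenever $X\le Y$, and $H(q,O)=0$ for all $q$. Condition B: there is $k_1\ge0$ with $H(\theta q,X)=|\theta|^{k_1}H(q,X)$ for all $\theta\in\mathbb{R}$ and $H(q,\theta X)=\theta H(q,X)$ for all $\theta>0$. Condition C: $\max_{|e|=1}H(e,-I)<0<\min_{|e|=1}H(e,I)$ and $\Lambda^{\sup}:=\sup_{\lambda\in\mathbb{R}}\max_{|e|=1}H(e,\lambda e\otimes e+I)<\infty$. Also $\Lambda^{\inf}:=\inf_{\lambda}\min_{|e|=1}H(e,\lambda e\otimes e-I)$. Set $k=k_1+1$, $\gamma=k+1$, and for $k>1$, $\gamma^*=\gamma/(\gamma-2)$; for $\sigma>1$, $\sigma^*=\sigma/(\sigma-1)$. $\mathbb{R}^n_T=\mathbb{R}^n\times(0,T)$, and for fixed $z$, $B^R_T=\{(x,t):|x-z|\le R,\ 0<t<T\}$. The operator is $\mathcal{P}_\sigma(t,u,u_t,Du,D^2u)=H(Du,D^2u+Z(u)Du\otimes Du)+\chi(t)|Du|^\sigma-u_t$, with the convention $|q|^0=1$. Solutions, sub-solutions and super-solutions are in the viscosity sense. *)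

theory Defs
  imports "HOL-Analysis.Analysis"
begin

text \<open>Powers with the convention |q|^0 = 1 (also for q = 0).\<close>
definition pw :: "real \<Rightarrow> real \<Rightarrow> real" where
  "pw x a = (if a = 0 then 1 else x powr a)"

definition symm :: "real^'n^'n \<Rightarrow> bool" where
  "symm X \<longleftrightarrow> transpose X = X"

definition mat_le :: "real^'n^'n \<Rightarrow> real^'n^'n \<Rightarrow> bool" where
  "mat_le X Y \<longleftrightarrow> (\<forall>v. 0 \<le> v \<bullet> ((Y - X) *v v))"

definition outer :: "real^'n \<Rightarrow> real^'n \<Rightarrow> real^'n^'n" where
  "outer e f = (\<chi> i j. e $ i * f $ j)"

definition condA :: "(real^'n \<Rightarrow> real^'n^'n \<Rightarrow> real) \<Rightarrow> bool" where
  "condA H \<longleftrightarrow>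
     (\<forall>q X Y. symm X \<and> symm Y \<and> mat_le X Y \<longrightarrow> H q X \<le> H q Y) \<and> (\<forall>q. H q 0 = 0)"

definition condB :: "(real^'n \<Rightarrow> real^'n^'n \<Rightarrow> real) \<Rightarrow> real \<Rightarrow> bool" where
  "condB H k1 \<longleftrightarrow> k1 \<ge> 0 \<and>
     (\<forall>\<theta> q X. symm X \<longrightarrow> H (\<theta> *\<^sub>R q) X = pw \<bar>\<theta>\<bar> k1 * H q X) \<and>
     (\<forall>\<theta> q X. symm X \<and> \<theta> > 0 \<longrightarrow> H q (\<theta> *\<^sub>R X) = \<theta> * H q X)"

definition condC :: "(real^'n \<Rightarrow> real^'n^'n \<Rightarrow> real) \<Rightarrow> bool" where
  "condC H \<longleftrightarrow>
     (SUP e\<in>sphere 0 1. H e (- mat 1)) < 0 \<and> 0 < (INF e\<in>sphere 0 1. H e (mat 1)) \<and>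
     (\<exists>M. \<forall>l e. norm e = 1 \<longrightarrow> H e (l *\<^sub>R outer e e + mat 1) \<le> M)"

definition H_cont :: "(real^'n \<Rightarrow> real^'n^'n \<Rightarrow> real) \<Rightarrow> bool" where
  "H_cont H \<longleftrightarrow> continuous_on (UNIV \<times> {X. symm X}) (\<lambda>(q, X). H q X)"

definition C21_on ::
  "(real^'n \<Rightarrow> real \<Rightarrow> real) \<Rightarrow> (real^'n \<Rightarrow> real \<Rightarrow> real) \<Rightarrow> (real^'n \<Rightarrow> real \<Rightarrow> real^'n)
   \<Rightarrow> (real^'n \<Rightarrow> real \<Rightarrow> real^'n^'n) \<Rightarrow> ((real^'n) \<times> real) set \<Rightarrow> bool" where
  "C21_on \<psi> \<psi>t D\<psi> D2\<psi> U \<longleftrightarrow> open U \<and>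
     (\<forall>x t. (x, t) \<in> U \<longrightarrow>
        ((\<lambda>s. \<psi> x s) has_real_derivative \<psi>t x t) (at t) \<and>
        ((\<lambda>y. \<psi> y t) has_derivative (\<lambda>v. D\<psi> x t \<bullet> v)) (at x) \<and>
        ((\<lambda>y. D\<psi> y t) has_derivative (\<lambda>v. D2\<psi> x t *v v)) (at x)) \<and>
     continuous_on U (\<lambda>(x, t). \<psi> x t) \<and>
     continuous_on U (\<lambda>(x, t). \<psi>t x t) \<and>
     continuous_on U (\<lambda>(x, t). D\<psi> x t) \<and>
     continuous_on U (\<lambda>(x, t). D2\<psi> x t)"

text \<open>Viscosity super-solution of
  P_sigma(t,u,u_t,Du,D^2u) = H(Du, D^2u + Z(u) Du\<otimes>Du) + chi(t)|Du|^sigma - u_t \<le> 0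
  in R^n_T = R^n x (0,T).\<close>
definition visc_super ::
  "(real^'n \<Rightarrow> real^'n^'n \<Rightarrow> real) \<Rightarrow> (real \<Rightarrow> real) \<Rightarrow> (real \<Rightarrow> real) \<Rightarrow> real \<Rightarrow> real
   \<Rightarrow> (real^'n \<Rightarrow> real \<Rightarrow> real) \<Rightarrow> bool" where
  "visc_super H Z c \<sigma> T u \<longleftrightarrow>
     (\<forall>y s \<psi> \<psi>t D\<psi> D2\<psi> U.
        0 < s \<and> s < T \<and> (y, s) \<in> U \<and> U \<subseteq> {(x, t). 0 < t \<and> t < T} \<and>
        C21_on \<psi> \<psi>t D\<psi> D2\<psi> U \<and>
        (\<forall>x t. (x, t) \<in> U \<longrightarrow> u y s - \<psi> y s \<le> u x t - \<psi> x t)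
        \<longrightarrow> H (D\<psi> y s) (D2\<psi> y s + Z (u y s) *\<^sub>R outer (D\<psi> y s) (D\<psi> y s))
            + c s * pw (norm (D\<psi> y s)) \<sigma> - \<psi>t y s \<le> 0)"

definition lsc_on :: "((real^'n) \<times> real) set \<Rightarrow> (real^'n \<Rightarrow> real \<Rightarrow> real) \<Rightarrow> bool" where
  "lsc_on D u \<longleftrightarrow> (\<forall>p\<in>D. \<forall>\<epsilon>>0. \<exists>\<delta>>0. \<forall>q\<in>D.
      dist q p < \<delta> \<longrightarrow> u (fst p) (snd p) - \<epsilon> < u (fst q) (snd q))"

definition cyl :: "real^'n \<Rightarrow> real \<Rightarrow> real \<Rightarrow> ((real^'n) \<times> real) set" where
  "cyl z R T = {(x, t). norm (x - z) \<le> R \<and> 0 < t \<and> t < T}"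

text \<open>sup over B^R_T of (-u) is o(R^beta) as R \<rightarrow> \<infinity> (beta > 0 in all applications;
  the supremum is bounded below by a constant, so this is the one-sided form).\<close>
definition neg_part_little_o :: "(real^'n \<Rightarrow> real \<Rightarrow> real) \<Rightarrow> real^'n \<Rightarrow> real \<Rightarrow> real \<Rightarrow> bool" where
  "neg_part_little_o u z T \<beta> \<longleftrightarrow>
     (\<forall>\<epsilon>>0. \<forall>\<^sub>F R in at_top. \<forall>x t. (x, t) \<in> cyl z R T \<longrightarrow> - u x t \<le> \<epsilon> * R powr \<beta>)"

end

theory Submission
  imports Defs
begin

text \<open>
  Comparison with an explicit barrier. With \<open>m = inf h\<close> and \<open>\<rho>(x) = 1 + |x - z|\<^sup>2\<close> put
  \<open>\<psi>(x, t) = m - a t - \<epsilon> / (t\<^sub>1 - t) - \<theta> e\<^bsup>\<Lambda> t\<^esup> \<rho>(x)\<^bsup>\<beta>/2\<^esup>\<close>.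
  If \<open>u(x\<^sub>0, t\<^sub>0) < m - a t\<^sub>0\<close>, then for small \<open>\<theta>\<close> and \<open>\<epsilon>\<close> the function \<open>u - \<psi>\<close> is negative
  at \<open>(x\<^sub>0, t\<^sub>0)\<close> but positive at \<open>t = 0\<close>, near \<open>t = t\<^sub>1\<close> and, by the growth hypothesis, on the
  lateral boundary \<open>|x - z| = R\<close> of a large cylinder; lower semicontinuity yields an interior
  minimum, where \<open>\<psi>\<close> is an admissible test function. Conditions A and B together with
  \<open>\<beta> k\<^sub>1 \<le> k\<^sub>1 + 2\<close> (that is, \<open>\<beta> \<le> \<gamma>\<^sup>*\<close>) bound \<open>H(D\<psi>, D\<^sup>2\<psi> + Z D\<psi> \<otimes> D\<psi>)\<close> below by
  \<open>-C \<theta> e\<^bsup>\<Lambda> t\<^esup> \<rho>\<^bsup>\<beta>/2\<^esup>\<close>, and \<open>\<chi> |D\<psi>|\<^sup>\<sigma> \<ge> -a - M \<theta> e\<^bsup>\<Lambda> t\<^esup> \<rho>\<^bsup>\<beta>/2\<^esup>\<close> with \<open>a = sup |\<chi>|\<close> if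
  \<open>\<sigma> = 0\<close>, with \<open>a\<close> arbitrarily small if \<open>0 < \<sigma> \<le> 1\<close> (Young's inequality) and with \<open>a = 0\<close> if
  \<open>\<sigma> \<ge> 1\<close> and \<open>\<sigma> (\<beta> - 1) \<le> \<beta>\<close>. Taking \<open>\<Lambda> > C + M\<close> makes \<open>\<psi>\<close> a strict classical
  sub-solution, contradicting the super-solution property at the minimum.
\<close>

section \<open>Symmetric matrices and the barrier weight\<close>

lemma outer_mult_vector: "outer e f *v v = (f \<bullet> v) *\<^sub>R e"
  by (simp add: vec_eq_iff outer_def matrix_vector_mult_def inner_vec_def sum_distrib_left algebra_simps)

lemma uminus_matrix_vector_mult: "(- X) *v v = - (X *v v)" for X :: "real^'n^'m"
  by (simp add: matrix_vector_mult_def vec_eq_iff sum_negf)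

lemma symm_mat: "symm (mat a :: real^'n^'n)"
  by (simp add: symm_def)

lemma symm_outer_self: "symm (outer w w)"
  by (simp add: symm_def transpose_def outer_def vec_eq_iff mult.commute)

lemma symm_add: "symm X \<Longrightarrow> symm Y \<Longrightarrow> symm (X + Y)"
  by (simp add: symm_def transpose_def vec_eq_iff)

lemma symm_scaleR: "symm X \<Longrightarrow> symm (a *\<^sub>R X)"
  by (simp add: symm_def transpose_scalar)

lemma symm_uminus: "symm X \<Longrightarrow> symm (- X)"
  by (simp add: symm_def transpose_def vec_eq_iff)

definition bracket :: "'a::real_inner \<Rightarrow> 'a \<Rightarrow> real" where
  "bracket z x = 1 + (x - z) \<bullet> (x - z)"

definition bracket_pow :: "'a::real_inner \<Rightarrow> real \<Rightarrow> 'a \<Rightarrow> real" where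
  "bracket_pow z b x = bracket z x powr (b/2)"

definition bracket_pow_grad :: "'a::real_inner \<Rightarrow> real \<Rightarrow> 'a \<Rightarrow> 'a" where
  "bracket_pow_grad z b x = (b * bracket z x powr (b/2 - 1)) *\<^sub>R (x - z)"

definition bracket_pow_hess :: "real^'n \<Rightarrow> real \<Rightarrow> real^'n \<Rightarrow> real^'n^'n" where
  "bracket_pow_hess z b x = (b * bracket z x powr (b/2 - 1)) *\<^sub>R mat 1
        + (b * (b - 2) * bracket z x powr (b/2 - 2)) *\<^sub>R outer (x - z) (x - z)"

lemma symm_bracket_pow_hess: "symm (bracket_pow_hess z b x)"
  unfolding bracket_pow_hess_def by (intro symm_add symm_scaleR symm_mat symm_outer_self)

lemma bracket_ge_1: "1 \<le> bracket z x"
  by (simp add: bracket_def)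

lemma bracket_pos: "0 < bracket z x"
  using bracket_ge_1[of z x] by linarith

lemma bracket_nonzero: "bracket z x \<noteq> 0"
  using bracket_pos[of z x] by simp

lemma bracket_powr_shift: "bracket z x powr (e + 1) = bracket z x powr e * bracket z x"
  using bracket_pos[of z x] by (simp add: powr_add)

lemma bracket_pow_ge_1: "0 \<le> b \<Longrightarrow> 1 \<le> bracket_pow z b x"
  unfolding bracket_pow_def using bracket_ge_1[of z x] by (simp add: ge_one_powr_ge_zero)

lemma bracket_pow_ge_dist_powr:
  assumes "0 \<le> b"
  shows "dist x z powr b \<le> bracket_pow z b x"
proof -
  have "dist x z powr b = (dist x z ^ 2) powr (b/2)"
    using powr_powr[of "dist x z" 2 "b/2"] by simp
  also have "\<dots> \<le> bracket z x powr (b/2)"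
    using assms by (intro powr_mono2) (auto simp: bracket_def dist_norm dot_square_norm)
  finally show ?thesis unfolding bracket_pow_def .
qed

lemma norm_le_bracket_powr_half: "norm (x - z) \<le> bracket z x powr (1/2)"
proof -
  have "norm (x - z) = sqrt ((x - z) \<bullet> (x - z))" by (simp add: norm_eq_sqrt_inner)
  also have "\<dots> \<le> sqrt (bracket z x)" unfolding bracket_def by simp
  also have "\<dots> = bracket z x powr (1/2)" using bracket_pos[of z x] by (simp add: powr_half_sqrt)
  finally show ?thesis .
qed

lemma norm_bracket_pow_grad:
  assumes "0 \<le> b"
  shows "norm (bracket_pow_grad z b x) \<le> b * bracket z x powr ((b - 1)/2)"
proof -
  have "norm (bracket_pow_grad z b x) = b * bracket z x powr (b/2 - 1) * norm (x - z)"
    unfolding bracket_pow_grad_def using assms by simp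
  also have "\<dots> \<le> b * bracket z x powr (b/2 - 1) * bracket z x powr (1/2)"
    using assms by (intro mult_left_mono norm_le_bracket_powr_half) auto
  also have "\<dots> = b * bracket z x powr ((b - 1)/2)"
    by (simp add: mult.assoc flip: powr_add) (simp add: field_simps)
  finally show ?thesis .
qed

lemma has_derivative_bracket:
  "(bracket z has_derivative (\<lambda>v. 2 * ((x - z) \<bullet> v))) (at x)"
  unfolding bracket_def by (auto intro!: derivative_eq_intros simp: inner_commute)

lemma has_derivative_bracket_pow:
  "(bracket_pow z b has_derivative (\<lambda>v. bracket_pow_grad z b x \<bullet> v)) (at x)"
  unfolding bracket_pow_def bracket_pow_grad_def
  apply (rule has_derivative_eq_rhs[OF has_derivative_powr[OF has_derivative_bracket has_derivative_const]])
  using bracket_pos[of z x] by (auto simp: powr_diff fun_eq_iff inner_scaleR_left)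

lemma has_derivative_bracket_pow_grad:
  "(bracket_pow_grad z b has_derivative (\<lambda>v. bracket_pow_hess z b x *v v)) (at x)"
proof -
  have sc: "b * (bracket z x powr (b/2 - 1) * (2 * ((x - z) \<bullet> v) * (b/2 - 1))) / bracket z x
      = b * (b - 2) * bracket z x powr (b/2 - 2) * ((x - z) \<bullet> v)" for v
    using bracket_powr_shift[of z x "b/2 - 2"] bracket_pos[of z x] by (simp add: field_simps)
  show ?thesis
    unfolding bracket_pow_grad_def bracket_pow_hess_def
    apply (rule has_derivative_eq_rhs)
     apply (rule has_derivative_scaleR)
      apply (rule has_derivative_mult[OF has_derivative_const])
      apply (rule has_derivative_powr[OF has_derivative_bracket has_derivative_const])
    using bracket_pos[of z x] apply simp
     apply simp
     apply (rule has_derivative_diff[OF has_derivative_ident has_derivative_const])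
    by (auto simp: fun_eq_iff matrix_vector_mult_add_rdistrib outer_mult_vector sc
        simp flip: scaleR_matrix_vector_assoc)
qed

lemma continuous_on_bracket [continuous_intros]:
  "continuous_on S f \<Longrightarrow> continuous_on S (\<lambda>p. bracket z (f p))"
  unfolding bracket_def by (intro continuous_intros)

lemma continuous_on_bracket_pow [continuous_intros]:
  "continuous_on S f \<Longrightarrow> continuous_on S (\<lambda>p. bracket_pow z b (f p))"
  unfolding bracket_pow_def by (intro continuous_intros) (simp_all add: bracket_nonzero)

lemma continuous_on_bracket_pow_grad [continuous_intros]:
  "continuous_on S f \<Longrightarrow> continuous_on S (\<lambda>p. bracket_pow_grad z b (f p))"
  unfolding bracket_pow_grad_def by (intro continuous_intros) (simp_all add: bracket_nonzero)

lemma continuous_on_bracket_pow_hess [continuous_intros]: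
  "continuous_on S f \<Longrightarrow> continuous_on S (\<lambda>p. bracket_pow_hess z b (f p))"
  unfolding bracket_pow_hess_def outer_def by (intro continuous_intros) (simp_all add: bracket_nonzero)

lemma C21_on_barrier:
  assumes "open U" "U \<subseteq> {(x, t). t < t1}"
  shows "C21_on (\<lambda>x t. m - a * t - e / (t1 - t) - th * exp (L * t) * bracket_pow z b x)
                (\<lambda>x t. - a - e / (t1 - t)^2 - L * (th * exp (L * t)) * bracket_pow z b x)
                (\<lambda>x t. (- (th * exp (L * t))) *\<^sub>R bracket_pow_grad z b x)
                (\<lambda>x t. (- (th * exp (L * t))) *\<^sub>R bracket_pow_hess z b x) U"
  unfolding C21_on_def
proof (intro conjI allI impI)
  show "open U" by fact
  fix x t assume "(x, t) \<in> U"
  then have "t < t1" using assms by auto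
  then show "((\<lambda>s. m - a * s - e / (t1 - s) - th * exp (L * s) * bracket_pow z b x) has_real_derivative
      - a - e / (t1 - t)^2 - L * (th * exp (L * t)) * bracket_pow z b x) (at t)"
    by (auto intro!: derivative_eq_intros simp: power2_eq_square)
  show "((\<lambda>y. m - a * t - e / (t1 - t) - th * exp (L * t) * bracket_pow z b y) has_derivative
      (\<lambda>v. (- (th * exp (L * t))) *\<^sub>R bracket_pow_grad z b x \<bullet> v)) (at x)"
    by (auto intro!: derivative_eq_intros has_derivative_bracket_pow)
  show "((\<lambda>y. (- (th * exp (L * t))) *\<^sub>R bracket_pow_grad z b y) has_derivative
      (\<lambda>v. ((- (th * exp (L * t))) *\<^sub>R bracket_pow_hess z b x) *v v)) (at x)"
    by (rule has_derivative_eq_rhs[OF has_derivative_scaleR_right[OF has_derivative_bracket_pow_grad]])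
      (simp add: fun_eq_iff uminus_matrix_vector_mult flip: scaleR_matrix_vector_assoc)
next
  have t1: "\<And>p. p \<in> U \<Longrightarrow> t1 - snd p \<noteq> 0" using assms by auto
  show "continuous_on U (\<lambda>(x, t). m - a * t - e / (t1 - t) - th * exp (L * t) * bracket_pow z b x)"
    unfolding case_prod_beta using t1 by (intro continuous_intros) auto
  show "continuous_on U (\<lambda>(x, t). - a - e / (t1 - t)^2 - L * (th * exp (L * t)) * bracket_pow z b x)"
    unfolding case_prod_beta using t1 by (intro continuous_intros) auto
  show "continuous_on U (\<lambda>(x, t). (- (th * exp (L * t))) *\<^sub>R bracket_pow_grad z b x)"
    unfolding case_prod_beta by (intro continuous_intros)
  show "continuous_on U (\<lambda>(x, t). (- (th * exp (L * t))) *\<^sub>R bracket_pow_hess z b x)"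
    unfolding case_prod_beta by (intro continuous_intros)
qed

section \<open>Lower bound for the second-order term\<close>

lemma mat_le_barrier_hess:
  assumes "0 \<le> b" "0 \<le> th" "0 \<le> Zv"
  shows "mat_le ((th * b * (1 + \<bar>b - 2\<bar>) * bracket z x powr (b/2 - 1)) *\<^sub>R (- mat 1))
                ((- th) *\<^sub>R bracket_pow_hess z b x + Zv *\<^sub>R outer p p)"
  unfolding mat_le_def
proof
  fix v
  define P where "P = bracket z x powr (b/2 - 1)"
  define Q where "Q = bracket z x powr (b/2 - 2)"
  define w where "w = x - z"
  have "P = Q * bracket z x"
    unfolding P_def Q_def using bracket_powr_shift[of z x "b/2 - 2"] by simp
  have "(w \<bullet> v)^2 \<le> (w \<bullet> w) * (v \<bullet> v)"
    by (metis Cauchy_Schwarz_ineq real_inner_class.inner_commute)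
  also have "\<dots> \<le> bracket z x * (v \<bullet> v)"
    unfolding w_def bracket_def by (intro mult_right_mono) auto
  finally have "(b - 2) * Q * (w \<bullet> v)^2 \<le> \<bar>b - 2\<bar> * Q * (bracket z x * (v \<bullet> v))"
    unfolding Q_def by (intro mult_mono) auto
  then have "th * b * ((b - 2) * Q * (w \<bullet> v)^2) \<le> th * b * (\<bar>b - 2\<bar> * P * (v \<bullet> v))"
    using assms \<open>P = Q * bracket z x\<close> by (intro mult_left_mono) auto
  moreover have "0 \<le> Zv * (p \<bullet> v)^2" using assms by simp
  moreover have "v \<bullet> ((((- th) *\<^sub>R bracket_pow_hess z b x + Zv *\<^sub>R outer p p)
            - (th * b * (1 + \<bar>b - 2\<bar>) * P) *\<^sub>R (- mat 1)) *v v)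
        = th * b * \<bar>b - 2\<bar> * P * (v \<bullet> v) - th * b * (b - 2) * Q * (w \<bullet> v)^2 + Zv * (p \<bullet> v)^2"
    unfolding bracket_pow_hess_def P_def[symmetric] Q_def[symmetric] w_def[symmetric]
    by (simp add: matrix_vector_mult_diff_rdistrib matrix_vector_mult_add_rdistrib uminus_matrix_vector_mult
        outer_mult_vector inner_add_right inner_diff_right power2_eq_square algebra_simps inner_commute
        flip: scaleR_matrix_vector_assoc)
  ultimately show "0 \<le> v \<bullet> ((((- th) *\<^sub>R bracket_pow_hess z b x + Zv *\<^sub>R outer p p)
            - (th * b * (1 + \<bar>b - 2\<bar>) * bracket z x powr (b/2 - 1)) *\<^sub>R (- mat 1)) *v v)"
    unfolding P_def by (simp add: algebra_simps)
qed

lemma H_bounded_below_on_sphere: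
  fixes H :: "real^'n \<Rightarrow> real^'n^'n \<Rightarrow> real"
  assumes "H_cont H"
  obtains C where "0 \<le> C" "\<And>e. norm e = 1 \<Longrightarrow> - C \<le> H e (- mat 1)"
proof -
  have "continuous_on (sphere 0 1) (\<lambda>e. (\<lambda>(q, X). H q X) (e, - mat 1))"
    using assms unfolding H_cont_def
    by (rule continuous_on_compose2) (auto intro!: continuous_intros simp: symm_uminus symm_mat)
  then have "bounded ((\<lambda>e. H e (- mat 1)) ` sphere 0 1)"
    by (intro compact_imp_bounded compact_continuous_image) auto
  then obtain B where B: "\<forall>e\<in>sphere 0 1. \<bar>H e (- mat 1)\<bar> \<le> B"
    unfolding bounded_iff by auto
  show ?thesis
  proof (rule that[of "max B 0"])
    fix e :: "real^'n" assume "norm e = 1"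
    then have "\<bar>H e (- mat 1)\<bar> \<le> B" using B by simp
    then show "- max B 0 \<le> H e (- mat 1)" by linarith
  qed simp
qed

lemma H_zero_gradient:
  assumes "condB H k1" "0 < k1" "symm Y"
  shows "H 0 Y = 0"
proof -
  have "H ((0::real) *\<^sub>R 0) Y = pw \<bar>0\<bar> k1 * H 0 Y"
    using assms unfolding condB_def by blast
  then show ?thesis using assms by (simp add: pw_def)
qed

lemma H_scaled_neg_identity_lower:
  assumes B: "condB H k1" and k1: "0 < k1" and lam: "0 < lam"
    and C: "\<And>e. norm e = 1 \<Longrightarrow> - C \<le> H e (- mat 1)"
  shows "- lam * C * norm q powr k1 \<le> H q (lam *\<^sub>R (- mat 1))"
proof (cases "q = 0")
  case True
  then show ?thesis
    using H_zero_gradient[OF B k1, of "lam *\<^sub>R (- mat 1)"] by (simp add: symm_scaleR symm_uminus symm_mat)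
next
  case False
  define e where "e = q /\<^sub>R norm q"
  have e: "norm e = 1" "q = norm q *\<^sub>R e"
    unfolding e_def using False by auto
  have sym: "symm (- mat 1 :: real^'n^'n)" "symm (lam *\<^sub>R (- mat 1) :: real^'n^'n)"
    by (simp_all add: symm_scaleR symm_uminus symm_mat)
  have hom: "H e (lam *\<^sub>R (- mat 1)) = lam * H e (- mat 1)"
    using B sym(1) lam unfolding condB_def by blast
  have "H q (lam *\<^sub>R (- mat 1)) = pw \<bar>norm q\<bar> k1 * H e (lam *\<^sub>R (- mat 1))"
    using B sym(2) e(2) unfolding condB_def by metis
  also have "\<dots> = norm q powr k1 * (lam * H e (- mat 1))"
    unfolding hom using k1 by (simp add: pw_def)
  finally have "H q (lam *\<^sub>R (- mat 1)) = norm q powr k1 * (lam * H e (- mat 1))" .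
  moreover have "- lam * C * norm q powr k1 \<le> lam * H e (- mat 1) * norm q powr k1"
    using mult_left_mono[OF C[OF e(1)], of lam] lam by (intro mult_right_mono) auto
  ultimately show ?thesis
    by (simp add: mult.commute)
qed

lemma powr_le_barrier_gradient:
  fixes d :: real
  assumes "0 \<le> th" "0 \<le> b" "0 \<le> p" "0 < r" "0 \<le> d" "d \<le> th * b * r powr ((b - 1)/2)"
  shows "d powr p \<le> th powr p * b powr p * r powr ((b - 1)/2 * p)"
proof -
  have "d powr p \<le> (th * b * r powr ((b - 1)/2)) powr p"
    using assms by (intro powr_mono2) auto
  also have "\<dots> = th powr p * b powr p * r powr ((b - 1)/2 * p)"
    using assms by (simp add: powr_mult powr_powr)
  finally show ?thesis .
qed

lemma barrier_gradient_exponent_bound: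
  assumes th: "0 \<le> th" "th \<le> 1" and b: "0 \<le> b" "b * k1 \<le> k1 + 2" and k1: "0 \<le> k1"
    and r: "1 \<le> r" and q: "norm q \<le> th * b * r powr ((b - 1)/2)"
  shows "r powr (b/2 - 1) * norm q powr k1 \<le> b powr k1 * r powr (b/2)"
proof -
  have "norm q powr k1 \<le> th powr k1 * b powr k1 * r powr ((b - 1)/2 * k1)"
    using assms by (intro powr_le_barrier_gradient) auto
  also have "\<dots> \<le> 1 * b powr k1 * r powr ((b - 1)/2 * k1)"
    using th k1 by (intro mult_right_mono powr_le1) auto
  finally have n: "norm q powr k1 \<le> b powr k1 * r powr ((b - 1)/2 * k1)" by simp
  have "r powr (b/2 - 1) * r powr ((b - 1)/2 * k1) = r powr (b/2 - 1 + (b - 1)/2 * k1)"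
    by (rule powr_add[symmetric])
  also have "\<dots> \<le> r powr (b/2)"
    using r b by (intro powr_mono) (auto simp: field_simps)
  finally have e: "r powr (b/2 - 1) * r powr ((b - 1)/2 * k1) \<le> r powr (b/2)" .
  have "r powr (b/2 - 1) * norm q powr k1 \<le> r powr (b/2 - 1) * (b powr k1 * r powr ((b - 1)/2 * k1))"
    using n by (intro mult_left_mono) auto
  also have "\<dots> = b powr k1 * (r powr (b/2 - 1) * r powr ((b - 1)/2 * k1))"
    by (simp only: mult.left_commute)
  also have "\<dots> \<le> b powr k1 * r powr (b/2)"
    using e by (intro mult_left_mono) auto
  finally show ?thesis .
qed

lemma H_barrier_hess_lower:
  fixes H :: "real^'n \<Rightarrow> real^'n^'n \<Rightarrow> real"
  assumes Hc: "H_cont H" and A: "condA H" and B: "condB H k1" and k1: "0 < k1"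
    and b: "0 < b" "b * k1 \<le> k1 + 2"
  obtains C where "0 \<le> C"
    "\<And>th Zv x q p. 0 < th \<Longrightarrow> th \<le> 1 \<Longrightarrow> 0 \<le> Zv \<Longrightarrow>
       norm q \<le> th * b * bracket z x powr ((b - 1)/2) \<Longrightarrow>
       - C * th * bracket_pow z b x \<le> H q ((- th) *\<^sub>R bracket_pow_hess z b x + Zv *\<^sub>R outer p p)"
proof -
  obtain C0 where C0: "0 \<le> C0" "\<And>e. norm e = 1 \<Longrightarrow> - C0 \<le> H e (- mat 1)"
    using H_bounded_below_on_sphere[OF Hc] by blast
  define C where "C = C0 * (b * (1 + \<bar>b - 2\<bar>) * b powr k1)"
  have "- C * th * bracket_pow z b x \<le> H q ((- th) *\<^sub>R bracket_pow_hess z b x + Zv *\<^sub>R outer p p)"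
    if th: "0 < th" "th \<le> 1" and Zv: "0 \<le> Zv" and q: "norm q \<le> th * b * bracket z x powr ((b - 1)/2)"
    for th Zv x q p
  proof -
    define r where "r = bracket z x"
    define lam where "lam = th * b * (1 + \<bar>b - 2\<bar>) * r powr (b/2 - 1)"
    have r: "1 \<le> r" unfolding r_def by (rule bracket_ge_1)
    have lam: "0 < lam" unfolding lam_def using th b r by simp
    have "r powr (b/2 - 1) * norm q powr k1 \<le> b powr k1 * r powr (b/2)"
      using th b k1 r q unfolding r_def by (intro barrier_gradient_exponent_bound) auto
    then have "lam * norm q powr k1 \<le> (th * b * (1 + \<bar>b - 2\<bar>)) * (b powr k1 * r powr (b/2))"
      unfolding lam_def using th b by (simp add: mult.assoc mult_left_mono)
    then have "C0 * (lam * norm q powr k1) \<le> C0 * ((th * b * (1 + \<bar>b - 2\<bar>)) * (b powr k1 * r powr (b/2)))"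
      using C0(1) by (rule mult_left_mono)
    moreover have "C * th * bracket_pow z b x = C0 * ((th * b * (1 + \<bar>b - 2\<bar>)) * (b powr k1 * r powr (b/2)))"
      unfolding C_def bracket_pow_def r_def by (simp add: ac_simps)
    ultimately have "- C * th * bracket_pow z b x \<le> - (C0 * (lam * norm q powr k1))" by linarith
    also have "\<dots> = - lam * C0 * norm q powr k1" by (simp add: ac_simps)
    also have "\<dots> \<le> H q (lam *\<^sub>R (- mat 1))"
      by (rule H_scaled_neg_identity_lower[OF B k1 lam C0(2)])
    also have "\<dots> \<le> H q ((- th) *\<^sub>R bracket_pow_hess z b x + Zv *\<^sub>R outer p p)"
    proof -
      have "symm (lam *\<^sub>R (- mat 1) :: real^'n^'n)"
        "symm ((- th) *\<^sub>R bracket_pow_hess z b x + Zv *\<^sub>R outer p p)"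
        by (intro symm_add symm_scaleR symm_uminus symm_mat symm_outer_self symm_bracket_pow_hess)+
      moreover have "mat_le (lam *\<^sub>R (- mat 1)) ((- th) *\<^sub>R bracket_pow_hess z b x + Zv *\<^sub>R outer p p)"
        unfolding lam_def r_def using mat_le_barrier_hess[of b th Zv z x p] b th Zv by simp
      ultimately show ?thesis using A unfolding condA_def by blast
    qed
    finally show ?thesis .
  qed
  moreover have "0 \<le> C" unfolding C_def using C0 b by simp
  ultimately show ?thesis using that by blast
qed

section \<open>Minima of lower semicontinuous functions\<close>

definition lower_semicontinuous_on :: "'a::metric_space set \<Rightarrow> ('a \<Rightarrow> real) \<Rightarrow> bool" where
  "lower_semicontinuous_on K f \<longleftrightarrow> (\<forall>p\<in>K. \<forall>\<epsilon>>0. \<exists>\<delta>>0. \<forall>q\<in>K. dist q p < \<delta> \<longrightarrow> f p - \<epsilon> < f q)"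

lemma lsc_on_iff: "lsc_on D u \<longleftrightarrow> lower_semicontinuous_on D (\<lambda>p. u (fst p) (snd p))"
  by (simp add: lsc_on_def lower_semicontinuous_on_def)

lemma lower_semicontinuous_on_subset:
  "lower_semicontinuous_on K f \<Longrightarrow> L \<subseteq> K \<Longrightarrow> lower_semicontinuous_on L f"
  unfolding lower_semicontinuous_on_def by (meson subsetD)

lemma lower_semicontinuous_on_diff:
  assumes f: "lower_semicontinuous_on K f" and g: "continuous_on K g"
  shows "lower_semicontinuous_on K (\<lambda>p. f p - g p)"
  unfolding lower_semicontinuous_on_def
proof (intro ballI allI impI)
  fix p and \<epsilon> :: real assume p: "p \<in> K" and \<epsilon>: "0 < \<epsilon>"
  obtain \<delta>1 where \<delta>1: "0 < \<delta>1" "\<forall>q\<in>K. dist q p < \<delta>1 \<longrightarrow> f p - \<epsilon>/2 < f q"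
    using f p \<epsilon> unfolding lower_semicontinuous_on_def by (meson half_gt_zero)
  obtain \<delta>2 where \<delta>2: "0 < \<delta>2" "\<forall>q\<in>K. dist q p < \<delta>2 \<longrightarrow> dist (g q) (g p) < \<epsilon>/2"
    using g p \<epsilon> unfolding continuous_on_iff by (meson half_gt_zero)
  show "\<exists>\<delta>>0. \<forall>q\<in>K. dist q p < \<delta> \<longrightarrow> f p - g p - \<epsilon> < f q - g q"
  proof (intro exI[of _ "min \<delta>1 \<delta>2"] conjI ballI impI)
    show "0 < min \<delta>1 \<delta>2" using \<delta>1 \<delta>2 by simp
    fix q assume "q \<in> K" "dist q p < min \<delta>1 \<delta>2"
    then have "f p - \<epsilon>/2 < f q" "\<bar>g q - g p\<bar> < \<epsilon>/2"
      using \<delta>1 \<delta>2 by (auto simp: dist_real_def)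
    then show "f p - g p - \<epsilon> < f q - g q" by linarith
  qed
qed

lemma closed_lower_semicontinuous_sublevel:
  assumes K: "closed K" and f: "lower_semicontinuous_on K f"
  shows "closed {p \<in> K. f p \<le> c}"
  unfolding closure_subset_eq[symmetric]
proof
  fix x assume x: "x \<in> closure {p \<in> K. f p \<le> c}"
  have "x \<in> K"
    using closure_mono[of "{p \<in> K. f p \<le> c}" K] x K by auto
  moreover have "f x \<le> c"
  proof (rule ccontr)
    assume "\<not> f x \<le> c"
    then have "0 < f x - c" by simp
    then obtain \<delta> where \<delta>: "0 < \<delta>" "\<And>q. q \<in> K \<Longrightarrow> dist q x < \<delta> \<Longrightarrow> f x - (f x - c) < f q"
      using f \<open>x \<in> K\<close> unfolding lower_semicontinuous_on_def by blast
    obtain y where "y \<in> {p \<in> K. f p \<le> c}" "dist y x < \<delta>"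
      using x \<delta>(1) unfolding closure_approachable by blast
    then show False using \<delta>(2)[of y] by simp
  qed
  ultimately show "x \<in> {p \<in> K. f p \<le> c}" by simp
qed

lemma lower_semicontinuous_on_attains_min:
  assumes K: "compact K" "K \<noteq> {}" and f: "lower_semicontinuous_on K f"
  obtains p where "p \<in> K" "\<And>q. q \<in> K \<Longrightarrow> f p \<le> f q"
proof -
  \<comment> \<open>The closed sublevel sets \<open>{f \<le> f q}\<close> form a chain, so compactness makes them intersect.\<close>
  have "K \<inter> (\<Inter>q\<in>K. {p \<in> K. f p \<le> f q}) \<noteq> {}"
  proof (rule compact_imp_fip_image[OF K(1)])
    show "closed {p \<in> K. f p \<le> f q}" for q
      using closed_lower_semicontinuous_sublevel[OF compact_imp_closed[OF K(1)] f] .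
    show "K \<inter> (\<Inter>q\<in>Q. {p \<in> K. f p \<le> f q}) \<noteq> {}" if "finite Q" "Q \<subseteq> K" for Q
    proof (cases "Q = {}")
      case False
      have "Min (f ` Q) \<in> f ` Q" using \<open>finite Q\<close> False by simp
      then obtain q0 where q0: "q0 \<in> Q" "f q0 = Min (f ` Q)" by (metis imageE)
      have "\<forall>q\<in>Q. f q0 \<le> f q"
        unfolding q0(2) using \<open>finite Q\<close> by simp
      then have "q0 \<in> K \<inter> (\<Inter>q\<in>Q. {p \<in> K. f p \<le> f q})"
        using q0(1) \<open>Q \<subseteq> K\<close> by blast
      then show ?thesis by blast
    qed (use K(2) in simp)
  qed
  then show ?thesis using that by blast
qed

lemma lsc_minus_continuous_attains_min_on_cylinder:
  fixes u \<psi> :: "real^'n \<Rightarrow> real \<Rightarrow> real"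
  assumes u: "lsc_on {(x, t). 0 \<le> t \<and> t < T} u" and t1: "t1 < T"
    and \<psi>: "continuous_on (cball z R \<times> {0..t1}) (\<lambda>(x, t). \<psi> x t)"
    and x0: "(x0, t0) \<in> cball z R \<times> {0..t1}"
  obtains y s where "(y, s) \<in> cball z R \<times> {0..t1}"
    "\<And>x t. (x, t) \<in> cball z R \<times> {0..t1} \<Longrightarrow> u y s - \<psi> y s \<le> u x t - \<psi> x t"
proof -
  let ?K = "cball z R \<times> {0..t1}"
  have "lower_semicontinuous_on ?K (\<lambda>p. u (fst p) (snd p) - \<psi> (fst p) (snd p))"
  proof (rule lower_semicontinuous_on_diff)
    show "lower_semicontinuous_on ?K (\<lambda>p. u (fst p) (snd p))"
      using t1 by (intro lower_semicontinuous_on_subset[OF u[unfolded lsc_on_iff]]) auto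
    show "continuous_on ?K (\<lambda>p. \<psi> (fst p) (snd p))"
      using \<psi> by (simp add: case_prod_beta)
  qed
  moreover have "compact ?K" by (intro compact_Times compact_cball compact_Icc)
  moreover have "?K \<noteq> {}" using x0 by blast
  ultimately obtain p where p: "p \<in> ?K" "\<And>q. q \<in> ?K \<Longrightarrow>
      u (fst p) (snd p) - \<psi> (fst p) (snd p) \<le> u (fst q) (snd q) - \<psi> (fst q) (snd q)"
    using lower_semicontinuous_on_attains_min by blast
  show ?thesis
  proof (rule that)
    show "(fst p, snd p) \<in> ?K" using p(1) by simp
    fix x t assume "(x, t) \<in> ?K"
    then show "u (fst p) (snd p) - \<psi> (fst p) (snd p) \<le> u x t - \<psi> x t" using p(2)[of "(x, t)"] by simp
  qed
qed

lemma lsc_minus_barrier_interior_min: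
  fixes u \<psi> :: "real^'n \<Rightarrow> real \<Rightarrow> real"
  assumes u: "lsc_on {(x, t). 0 \<le> t \<and> t < T} u" and t1: "t1 < T"
    and \<psi>: "continuous_on (cball z R \<times> {0..<t1}) (\<lambda>(x, t). \<psi> x t)"
    and blowup: "\<And>M. \<exists>\<eta>>0. \<forall>x t. t1 - \<eta> < t \<and> t < t1 \<longrightarrow> \<psi> x t \<le> M"
    and init: "\<And>x. \<psi> x 0 < u x 0"
    and side: "\<And>x t. norm (x - z) = R \<Longrightarrow> 0 < t \<Longrightarrow> t < t1 \<Longrightarrow> \<psi> x t < u x t"
    and neg: "norm (x0 - z) \<le> R" "0 \<le> t0" "t0 < t1" "u x0 t0 < \<psi> x0 t0"
  obtains y s where "norm (y - z) < R" "0 < s" "s < t1"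
    "\<And>x t. norm (x - z) < R \<Longrightarrow> 0 < t \<Longrightarrow> t < t1 \<Longrightarrow> u y s - \<psi> y s \<le> u x t - \<psi> x t"
proof -
  have cball: "x \<in> cball z R \<longleftrightarrow> norm (x - z) \<le> R" for x
    by (simp add: dist_norm norm_minus_commute)
  have x0: "(x0, t0) \<in> cball z R \<times> {0..t1}" using neg cball by simp
  have "continuous_on (cball z R \<times> {0..t1}) (\<lambda>(x, t). 0 :: real)"
    by (simp add: case_prod_unfold)
  then obtain y1 s1 where L: "\<And>x t. (x, t) \<in> cball z R \<times> {0..t1} \<Longrightarrow> u y1 s1 - 0 \<le> u x t - 0"
    by (metis lsc_minus_continuous_attains_min_on_cylinder[OF u t1 _ x0])
  obtain \<eta> where \<eta>: "0 < \<eta>" "\<And>x t. t1 - \<eta> < t \<Longrightarrow> t < t1 \<Longrightarrow> \<psi> x t \<le> u y1 s1 - 1"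
    using blowup[of "u y1 s1 - 1"] by blast
  define t2 where "t2 = t1 - min \<eta> ((t1 - t0)/2)"
  have t2: "t0 \<le> t2" "t2 < t1" "t1 - \<eta> \<le> t2"
    unfolding t2_def using \<eta>(1) neg(3) by (auto simp: min_def field_simps)
  have "continuous_on (cball z R \<times> {0..t2}) (\<lambda>(x, t). \<psi> x t)"
    using t2 by (intro continuous_on_subset[OF \<psi>]) auto
  moreover have "(x0, t0) \<in> cball z R \<times> {0..t2}" using neg t2 cball by simp
  moreover have "t2 < T" using t1 t2 by simp
  ultimately obtain y s where ys: "(y, s) \<in> cball z R \<times> {0..t2}"
    and min: "\<And>x t. (x, t) \<in> cball z R \<times> {0..t2} \<Longrightarrow> u y s - \<psi> y s \<le> u x t - \<psi> x t"
    by (metis lsc_minus_continuous_attains_min_on_cylinder[OF u])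
  have neg_min: "u y s - \<psi> y s < 0" using min[of x0 t0] neg t2 cball by simp
  then have "s \<noteq> 0" using init[of y] by force
  then have s: "0 < s" "s < t1" using ys t2 by auto
  show ?thesis
  proof (rule that)
    show "norm (y - z) < R"
      using side[of y s] s neg_min ys cball by force
    show "0 < s" "s < t1" by (fact s)+
    fix x t assume x: "norm (x - z) < R" and t: "0 < t" "t < t1"
    show "u y s - \<psi> y s \<le> u x t - \<psi> x t"
    proof (cases "t \<le> t2")
      case True
      then show ?thesis using min[of x t] x t cball by simp
    next
      case False
      then have "\<psi> x t \<le> u y1 s1 - 1" using \<eta>(2) t t2 by simp
      moreover have "u y1 s1 \<le> u x t" using L[of x t] x t cball by simp
      ultimately show ?thesis using neg_min by simp
    qed
  qed
qed

section \<open>The first-order term\<close>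

text \<open>Here \<open>d\<close> stands for \<open>|D\<psi>|\<close>, \<open>r \<ge> 1\<close> for \<open>\<rho>(x)\<close> and \<open>th = \<theta> e\<^bsup>\<Lambda> t\<^esup> \<le> 1\<close>,
  see \<open>norm_bracket_pow_grad\<close>.\<close>

definition drift_lower_bound :: "(real \<Rightarrow> real) \<Rightarrow> real \<Rightarrow> real \<Rightarrow> real \<Rightarrow> real \<Rightarrow> real \<Rightarrow> bool" where
  "drift_lower_bound c \<sigma> T b a M \<longleftrightarrow>
     (\<forall>s th r d. 0 < s \<and> s < T \<and> 0 < th \<and> th \<le> 1 \<and> 1 \<le> r \<and> 0 \<le> d \<and> d \<le> th * b * r powr ((b - 1)/2)
        \<longrightarrow> - a - M * th * r powr (b/2) \<le> c s * pw d \<sigma>)"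

lemma drift_lower_bound_sigma_zero:
  assumes "\<And>s. 0 < s \<Longrightarrow> s < T \<Longrightarrow> \<bar>c s\<bar> \<le> K"
  shows "drift_lower_bound c 0 T b K 0"
  using assms unfolding drift_lower_bound_def pw_def by (fastforce simp: abs_le_iff)

lemma powr_le_young:
  fixes x e s :: real
  assumes x: "0 \<le> x" and s: "0 < s" "s \<le> 1" and e: "0 < e"
  shows "x powr s \<le> e + e powr ((s - 1)/s) * x"
proof (cases "x \<le> e powr (1/s)")
  case True
  have "x powr s \<le> (e powr (1/s)) powr s" using True x s by (intro powr_mono2) auto
  also have "\<dots> = e" using s e by (simp add: powr_powr)
  finally show ?thesis using e x by (simp add: add_increasing2)
next
  case False
  moreover have "0 < e powr (1/s)" using e by simp
  ultimately have "0 < x" by linarith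
  have "x powr s = x * x powr (s - 1)"
    using \<open>0 < x\<close> by (simp add: powr_mult_base)
  also have "\<dots> \<le> x * (e powr (1/s)) powr (s - 1)"
    using False e s \<open>0 < x\<close> by (intro mult_left_mono powr_mono2') auto
  also have "\<dots> = e powr ((s - 1)/s) * x" by (simp add: powr_powr mult.commute)
  finally show ?thesis using e by simp
qed

lemma drift_lower_bound_sublinear:
  assumes \<sigma>: "0 < \<sigma>" "\<sigma> \<le> 1" and b: "0 \<le> b" and K: "0 \<le> K" and e: "0 < e"
    and cK: "\<And>s. 0 < s \<Longrightarrow> s < T \<Longrightarrow> \<bar>c s\<bar> \<le> K"
  shows "drift_lower_bound c \<sigma> T b (K * e) (K * e powr ((\<sigma> - 1)/\<sigma>) * b)"
  unfolding drift_lower_bound_def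
proof (intro allI impI, elim conjE)
  fix s th r d
  assume s: "0 < s" "s < T" and th: "0 < th" "th \<le> 1" and r: "1 \<le> r" and d: "0 \<le> d"
    "d \<le> th * b * r powr ((b - 1)/2)"
  define E where "E = e powr ((\<sigma> - 1)/\<sigma>)"
  have "th * b * r powr ((b - 1)/2) \<le> th * b * r powr (b/2)"
    using th b r by (intro mult_left_mono powr_mono) auto
  then have "E * d \<le> E * (th * b * r powr (b/2))"
    using d(2) unfolding E_def by (intro mult_left_mono) auto
  then have "d powr \<sigma> \<le> e + E * (th * b * r powr (b/2))"
    using powr_le_young[OF d(1) \<sigma> e] unfolding E_def by linarith
  then have "K * d powr \<sigma> \<le> K * (e + E * (th * b * r powr (b/2)))"
    using K by (rule mult_left_mono)
  also have "\<dots> = K * e + K * E * b * th * r powr (b/2)" by (simp add: algebra_simps)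
  finally have "K * d powr \<sigma> \<le> K * e + K * E * b * th * r powr (b/2)" .
  moreover have "- K * d powr \<sigma> \<le> c s * d powr \<sigma>"
    using cK[OF s] by (intro mult_right_mono) auto
  ultimately show "- (K * e) - K * e powr ((\<sigma> - 1)/\<sigma>) * b * th * r powr (b/2) \<le> c s * pw d \<sigma>"
    using \<sigma> unfolding E_def by (simp add: pw_def)
qed

lemma drift_lower_bound_superlinear:
  assumes \<sigma>: "1 \<le> \<sigma>" "\<sigma> * (b - 1) \<le> b" and b: "0 \<le> b" and K: "0 \<le> K"
    and cK: "\<And>s. 0 < s \<Longrightarrow> s < T \<Longrightarrow> \<bar>c s\<bar> \<le> K"
  shows "drift_lower_bound c \<sigma> T b 0 (K * b powr \<sigma>)"
  unfolding drift_lower_bound_def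
proof (intro allI impI, elim conjE)
  fix s th r d
  assume s: "0 < s" "s < T" and th: "0 < th" "th \<le> 1" and r: "1 \<le> r" and d: "0 \<le> d"
    "d \<le> th * b * r powr ((b - 1)/2)"
  have "d powr \<sigma> \<le> th powr \<sigma> * b powr \<sigma> * r powr ((b - 1)/2 * \<sigma>)"
    using d th b \<sigma> r by (intro powr_le_barrier_gradient) auto
  also have "\<dots> \<le> th * b powr \<sigma> * r powr (b/2)"
  proof -
    have "th powr \<sigma> \<le> th" using th \<sigma> by (intro powr_le_one_le) auto
    moreover have "r powr ((b - 1)/2 * \<sigma>) \<le> r powr (b/2)"
      using r \<sigma> by (intro powr_mono) (auto simp: field_simps)
    ultimately show ?thesis using th by (intro mult_mono) auto
  qed
  finally have "K * d powr \<sigma> \<le> K * b powr \<sigma> * th * r powr (b/2)"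
    using K by (simp add: mult_left_mono ac_simps)
  moreover have "- K * d powr \<sigma> \<le> c s * d powr \<sigma>"
    using cK[OF s] by (intro mult_right_mono) auto
  ultimately show "- 0 - K * b powr \<sigma> * th * r powr (b/2) \<le> c s * pw d \<sigma>"
    using \<sigma> by (simp add: pw_def)
qed

section \<open>The comparison argument\<close>

lemma neg_part_little_o_eventually_gt:
  assumes growth: "neg_part_little_o u z T b" and b: "0 < b" and th: "0 < th"
  shows "\<forall>\<^sub>F R in at_top. \<forall>x t. (x, t) \<in> cyl z R T \<longrightarrow> m - th * R powr b < u x t"
proof -
  have "0 < th/2" using th by simp
  then have "\<forall>\<^sub>F R in at_top. \<forall>x t. (x, t) \<in> cyl z R T \<longrightarrow> - u x t \<le> th/2 * R powr b"
    using growth unfolding neg_part_little_o_def by blast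
  moreover have "\<forall>\<^sub>F R in at_top. m < th/2 * R powr b"
  proof -
    define R0 where "R0 = (2 * (\<bar>m\<bar> + 1) / th) powr (1/b)"
    have "m < th/2 * R powr b" if "R0 \<le> R" for R
    proof -
      have "2 * (\<bar>m\<bar> + 1) / th = R0 powr b" unfolding R0_def using th b by (simp add: powr_powr)
      also have "\<dots> \<le> R powr b" using that b unfolding R0_def by (intro powr_mono2) auto
      finally show ?thesis using th by (simp add: field_simps)
    qed
    then show ?thesis using eventually_ge_at_top[of R0] by (rule eventually_mono[rotated])
  qed
  ultimately show ?thesis
  proof eventually_elim
    case (elim R)
    have "th * R powr b = 2 * (th/2 * R powr b)" by simp
    then show ?case using elim by force
  qed
qed

lemma barrier_blowup:
  assumes e: "0 < e" and a: "0 \<le> a" and th: "0 \<le> th" and t1: "0 < t1"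
  shows "\<exists>\<eta>>0. \<forall>x t. t1 - \<eta> < t \<and> t < t1 \<longrightarrow>
           m - a * t - e / (t1 - t) - th * exp (L * t) * bracket_pow z b x \<le> N"
proof (intro exI[of _ "min t1 (e / (\<bar>N - m\<bar> + 1))"] conjI allI impI)
  show "0 < min t1 (e / (\<bar>N - m\<bar> + 1))" using e t1 by simp
  fix x t assume t: "t1 - min t1 (e / (\<bar>N - m\<bar> + 1)) < t \<and> t < t1"
  then have "0 < t" "t1 - t < e / (\<bar>N - m\<bar> + 1)"
    by auto
  then have "(t1 - t) * (\<bar>N - m\<bar> + 1) < e"
    by (simp add: pos_less_divide_eq add_nonneg_pos)
  then have "\<bar>N - m\<bar> + 1 \<le> e / (t1 - t)" using t by (simp add: le_divide_eq mult.commute)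
  moreover have "0 \<le> a * t + th * exp (L * t) * bracket_pow z b x"
    using a th \<open>0 < t\<close> by (simp add: bracket_pow_def)
  ultimately show "m - a * t - e / (t1 - t) - th * exp (L * t) * bracket_pow z b x \<le> N" by linarith
qed

lemma barrier_strict_subsolution:
  fixes H :: "real^'n \<Rightarrow> real^'n^'n \<Rightarrow> real"
  assumes HC: "\<And>th Zv x q p. 0 < th \<Longrightarrow> th \<le> 1 \<Longrightarrow> 0 \<le> Zv \<Longrightarrow>
       norm q \<le> th * b * bracket z x powr ((b - 1)/2) \<Longrightarrow>
       - C * th * bracket_pow z b x \<le> H q ((- th) *\<^sub>R bracket_pow_hess z b x + Zv *\<^sub>R outer p p)"
    and drift: "drift_lower_bound c \<sigma> T b a M" and b: "0 \<le> b" and \<Lambda>: "C + M < \<Lambda>"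
    and s: "0 < s" "s < T" and th: "0 < th" "th \<le> 1" and Zv: "0 \<le> Zv" and e: "0 \<le> e"
  shows "0 < H ((- th) *\<^sub>R bracket_pow_grad z b y)
               ((- th) *\<^sub>R bracket_pow_hess z b y
                + Zv *\<^sub>R outer ((- th) *\<^sub>R bracket_pow_grad z b y) ((- th) *\<^sub>R bracket_pow_grad z b y))
             + c s * pw (norm ((- th) *\<^sub>R bracket_pow_grad z b y)) \<sigma>
             - (- a - e - \<Lambda> * th * bracket_pow z b y)"
proof -
  define q where "q = (- th) *\<^sub>R bracket_pow_grad z b y"
  define g where "g = bracket_pow z b y"
  have q: "norm q \<le> th * b * bracket z y powr ((b - 1)/2)"
    unfolding q_def using norm_bracket_pow_grad[OF b, of z y] th by (simp add: mult.assoc mult_left_mono)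
  have "- C * th * g \<le> H q ((- th) *\<^sub>R bracket_pow_hess z b y + Zv *\<^sub>R outer q q)"
    unfolding g_def using HC[OF th Zv q] .
  moreover have "- a - M * th * g \<le> c s * pw (norm q) \<sigma>"
    using drift s th q bracket_ge_1[of z y] unfolding drift_lower_bound_def g_def bracket_pow_def by simp
  moreover have "0 < (\<Lambda> - C - M) * (th * g)"
    using \<Lambda> th bracket_pow_ge_1[OF b, of z y] unfolding g_def by simp
  ultimately show ?thesis
    unfolding q_def[symmetric] g_def[symmetric] using e by (simp add: algebra_simps)
qed

lemma exp_weight_small:
  assumes "0 < \<delta>" "1 \<le> g0" "0 \<le> \<Lambda>"
  obtains \<theta> :: real where "0 < \<theta>" "\<And>t. t \<le> T \<Longrightarrow> \<theta> * exp (\<Lambda> * t) \<le> 1"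
    "\<And>t. t \<le> T \<Longrightarrow> \<theta> * exp (\<Lambda> * t) * g0 \<le> \<delta> / 4"
proof -
  define k where "k = min 1 (\<delta> / (4 * g0))"
  have k: "0 < k" unfolding k_def using assms by simp
  have le_k: "k * exp (- \<Lambda> * T) * exp (\<Lambda> * t) \<le> k" if "t \<le> T" for t
  proof -
    have "exp (- \<Lambda> * T) * exp (\<Lambda> * t) \<le> 1"
      using assms that by (simp add: mult_left_mono flip: exp_add)
    then show ?thesis using k by (simp add: mult.assoc mult_left_le)
  qed
  show ?thesis
  proof (rule that[of "k * exp (- \<Lambda> * T)"])
    show "0 < k * exp (- \<Lambda> * T)" using k by simp
    show "k * exp (- \<Lambda> * T) * exp (\<Lambda> * t) \<le> 1" if "t \<le> T" for t
      using le_k[OF that] unfolding k_def by linarith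
    show "k * exp (- \<Lambda> * T) * exp (\<Lambda> * t) * g0 \<le> \<delta> / 4" if "t \<le> T" for t
    proof -
      have "k * exp (- \<Lambda> * T) * exp (\<Lambda> * t) * g0 \<le> \<delta> / (4 * g0) * g0"
        using le_k[OF that] assms unfolding k_def by (intro mult_right_mono) auto
      then show ?thesis using assms by simp
    qed
  qed
qed

lemma barrier_interior_min:
  fixes u \<psi> :: "real^'n \<Rightarrow> real \<Rightarrow> real"
  assumes \<psi>: "\<And>x t. \<psi> x t = m - a * t - \<epsilon> / (t1 - t) - \<theta> * exp (\<Lambda> * t) * bracket_pow z b x"
    and ulsc: "lsc_on {(x, t). 0 \<le> t \<and> t < T} u" and uinit: "\<And>x. m \<le> u x 0"
    and side: "\<And>x t. (x, t) \<in> cyl z R T \<Longrightarrow> m - \<theta> * R powr b < u x t"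
    and a: "0 \<le> a" and \<epsilon>: "0 < \<epsilon>" and \<theta>: "0 < \<theta>" and \<Lambda>: "0 \<le> \<Lambda>" and b: "0 \<le> b"
    and t1: "0 < t1" "t1 < T"
    and x0: "norm (x0 - z) \<le> R" "0 \<le> t0" "t0 < t1" "u x0 t0 < \<psi> x0 t0"
  obtains y s where "norm (y - z) < R" "0 < s" "s < t1"
    "\<And>x t. norm (x - z) < R \<Longrightarrow> 0 < t \<Longrightarrow> t < t1 \<Longrightarrow> u y s - \<psi> y s \<le> u x t - \<psi> x t"
proof (rule lsc_minus_barrier_interior_min[OF ulsc t1(2), of z R \<psi>])
  show "continuous_on (cball z R \<times> {0..<t1}) (\<lambda>(x, t). \<psi> x t)"
    unfolding \<psi> case_prod_beta by (intro continuous_intros) auto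
  show "\<exists>\<eta>>0. \<forall>x t. t1 - \<eta> < t \<and> t < t1 \<longrightarrow> \<psi> x t \<le> N" for N
    unfolding \<psi> using \<epsilon> a \<theta> t1 by (intro barrier_blowup) auto
  show "\<psi> x 0 < u x 0" for x
  proof -
    have "0 < \<epsilon> / t1" "0 \<le> \<theta> * bracket_pow z b x"
      using \<epsilon> t1 \<theta> by (simp_all add: bracket_pow_def)
    then show ?thesis using uinit[of x] unfolding \<psi> by simp
  qed
  show "\<psi> x t < u x t" if x: "norm (x - z) = R" and t: "0 < t" "t < t1" for x t
  proof -
    have "R powr b \<le> bracket_pow z b x"
      using bracket_pow_ge_dist_powr[OF b, of x z] x by (simp add: dist_norm)
    also have "\<dots> \<le> exp (\<Lambda> * t) * bracket_pow z b x"
      using mult_right_mono[of 1 "exp (\<Lambda> * t)" "bracket_pow z b x"] \<Lambda> t by (simp add: bracket_pow_def)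
    finally have "\<theta> * R powr b \<le> \<theta> * exp (\<Lambda> * t) * bracket_pow z b x"
      using \<theta> by (simp add: mult.assoc mult_left_mono)
    moreover have "0 \<le> a * t" "0 \<le> \<epsilon> / (t1 - t)" using a \<epsilon> t by simp_all
    moreover have "m - \<theta> * R powr b < u x t" using side x t t1 unfolding cyl_def by simp
    ultimately show ?thesis unfolding \<psi> by linarith
  qed
qed (use x0 in auto)

lemma barrier_no_interior_min:
  fixes H :: "real^'n \<Rightarrow> real^'n^'n \<Rightarrow> real" and u \<psi> :: "real^'n \<Rightarrow> real \<Rightarrow> real"
  assumes \<psi>: "\<And>x t. \<psi> x t = m - a * t - \<epsilon> / (t1 - t) - \<theta> * exp (\<Lambda> * t) * bracket_pow z b x"
    and usup: "visc_super H Z c \<sigma> T u" and Zp: "\<forall>r. Z r \<ge> 0"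
    and HC: "\<And>th Zv x q p. 0 < th \<Longrightarrow> th \<le> 1 \<Longrightarrow> 0 \<le> Zv \<Longrightarrow>
       norm q \<le> th * b * bracket z x powr ((b - 1)/2) \<Longrightarrow>
       - C * th * bracket_pow z b x \<le> H q ((- th) *\<^sub>R bracket_pow_hess z b x + Zv *\<^sub>R outer p p)"
    and drift: "drift_lower_bound c \<sigma> T b a M" and b: "0 \<le> b" and \<Lambda>: "C + M < \<Lambda>"
    and \<epsilon>: "0 \<le> \<epsilon>" and t1: "t1 \<le> T" and \<theta>: "0 < \<theta>" "\<theta> * exp (\<Lambda> * s) \<le> 1"
    and y: "norm (y - z) < R" and s: "0 < s" "s < t1"
    and min: "\<And>x t. norm (x - z) < R \<Longrightarrow> 0 < t \<Longrightarrow> t < t1 \<Longrightarrow> u y s - \<psi> y s \<le> u x t - \<psi> x t"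
  shows False
proof -
  define U where "U = ball z R \<times> {0<..<t1}"
  define \<psi>t where "\<psi>t x t = - a - \<epsilon> / (t1 - t)^2 - \<Lambda> * (\<theta> * exp (\<Lambda> * t)) * bracket_pow z b x" for x t
  define D\<psi> where "D\<psi> x t = (- (\<theta> * exp (\<Lambda> * t))) *\<^sub>R bracket_pow_grad z b x" for x t
  define D2\<psi> where "D2\<psi> x t = (- (\<theta> * exp (\<Lambda> * t))) *\<^sub>R bracket_pow_hess z b x" for x t
  have "open U" "U \<subseteq> {(x, t). t < t1}" unfolding U_def by (auto intro: open_Times)
  then have "C21_on \<psi> \<psi>t D\<psi> D2\<psi> U"
    unfolding \<psi>[abs_def] \<psi>t_def[abs_def] D\<psi>_def[abs_def] D2\<psi>_def[abs_def] by (rule C21_on_barrier)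
  moreover have "(y, s) \<in> U" "U \<subseteq> {(x, t). 0 < t \<and> t < T}"
    unfolding U_def using y s t1 by (auto simp: dist_norm norm_minus_commute)
  moreover have "\<forall>x t. (x, t) \<in> U \<longrightarrow> u y s - \<psi> y s \<le> u x t - \<psi> x t"
    unfolding U_def using min by (auto simp: dist_norm norm_minus_commute)
  ultimately have "H (D\<psi> y s) (D2\<psi> y s + Z (u y s) *\<^sub>R outer (D\<psi> y s) (D\<psi> y s))
      + c s * pw (norm (D\<psi> y s)) \<sigma> - \<psi>t y s \<le> 0"
    using s t1 by (intro usup[unfolded visc_super_def, rule_format, of s y U \<psi> \<psi>t D\<psi> D2\<psi>]) auto
  moreover have "0 < H (D\<psi> y s) (D2\<psi> y s + Z (u y s) *\<^sub>R outer (D\<psi> y s) (D\<psi> y s))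
      + c s * pw (norm (D\<psi> y s)) \<sigma> - \<psi>t y s"
    unfolding \<psi>t_def D\<psi>_def D2\<psi>_def
    by (rule barrier_strict_subsolution[OF HC drift]) (use b \<Lambda> s t1 \<theta> Zp \<epsilon> in auto)
  ultimately show False by linarith
qed

lemma supersolution_ge_inf_minus_drift:
  fixes H :: "real^'n \<Rightarrow> real^'n^'n \<Rightarrow> real" and u :: "real^'n \<Rightarrow> real \<Rightarrow> real"
  assumes Hc: "H_cont H" and A: "condA H" and B: "condB H k1" and k1: "0 < k1"
    and hb: "bdd_below (range h)" and Zp: "\<forall>r. Z r \<ge> 0"
    and ulsc: "lsc_on {(x, t). 0 \<le> t \<and> t < T} u" and usup: "visc_super H Z c \<sigma> T u"
    and uinit: "\<forall>x. u x 0 \<ge> h x" and growth: "neg_part_little_o u z T b"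
    and b: "0 < b" "b * k1 \<le> k1 + 2"
    and a: "0 \<le> a" and M: "0 \<le> M" and drift: "drift_lower_bound c \<sigma> T b a M"
    and t0: "0 < t0" "t0 < T"
  shows "(INF y. h y) - a * t0 \<le> u x0 t0"
proof (rule ccontr)
  assume neg: "\<not> ?thesis"
  define m where "m = (INF y. h y)"
  define \<delta> where "\<delta> = m - a * t0 - u x0 t0"
  have \<delta>: "0 < \<delta>" using neg unfolding \<delta>_def m_def by simp
  have m: "m \<le> u x 0" for x
    unfolding m_def using order_trans[OF cINF_lower[OF hb UNIV_I] uinit[rule_format]] .
  obtain C where "0 \<le> C" and HC: "\<And>th Zv x q p. 0 < th \<Longrightarrow> th \<le> 1 \<Longrightarrow> 0 \<le> Zv \<Longrightarrow>
       norm q \<le> th * b * bracket z x powr ((b - 1)/2) \<Longrightarrow>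
       - C * th * bracket_pow z b x \<le> H q ((- th) *\<^sub>R bracket_pow_hess z b x + Zv *\<^sub>R outer p p)"
    using H_barrier_hess_lower[OF Hc A B k1 b] by blast
  define \<Lambda> where "\<Lambda> = C + M + 1"
  have "1 \<le> bracket_pow z b x0" "0 \<le> \<Lambda>"
    using b \<open>0 \<le> C\<close> M by (simp_all add: bracket_pow_ge_1 \<Lambda>_def)
  then obtain \<theta> where \<theta>: "0 < \<theta>" "\<And>t. t \<le> T \<Longrightarrow> \<theta> * exp (\<Lambda> * t) \<le> 1"
    "\<And>t. t \<le> T \<Longrightarrow> \<theta> * exp (\<Lambda> * t) * bracket_pow z b x0 \<le> \<delta> / 4"
    using exp_weight_small[OF \<delta>] by blast
  define t1 where "t1 = (t0 + T) / 2"
  define \<epsilon> where "\<epsilon> = \<delta> * (t1 - t0) / 4"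
  define \<psi> where "\<psi> x t = m - a * t - \<epsilon> / (t1 - t) - \<theta> * exp (\<Lambda> * t) * bracket_pow z b x" for x t
  have t1: "t0 < t1" "t1 < T" unfolding t1_def using t0 by auto
  have \<epsilon>: "0 < \<epsilon>" "\<epsilon> / (t1 - t0) = \<delta> / 4" unfolding \<epsilon>_def using \<delta> t1 by (auto simp: field_simps)
  have "u x0 t0 < \<psi> x0 t0" unfolding \<psi>_def using \<theta>(3)[of t0] t0 \<epsilon> \<delta> \<delta>_def by linarith
  obtain R where R: "norm (x0 - z) \<le> R" "\<And>x t. (x, t) \<in> cyl z R T \<Longrightarrow> m - \<theta> * R powr b < u x t"
    using eventually_happens'[OF _ eventually_conj[OF eventually_ge_at_top[of "norm (x0 - z)"]
          neg_part_little_o_eventually_gt[OF growth b(1) \<theta>(1), of m]]] by auto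
  obtain y s where ys: "norm (y - z) < R" "0 < s" "s < t1"
    "\<And>x t. norm (x - z) < R \<Longrightarrow> 0 < t \<Longrightarrow> t < t1 \<Longrightarrow> u y s - \<psi> y s \<le> u x t - \<psi> x t"
    using barrier_interior_min[OF \<psi>_def ulsc m R(2) a \<epsilon>(1) \<theta>(1) _ _ _ t1(2) R(1) _ t1(1)]
      \<open>u x0 t0 < \<psi> x0 t0\<close> b t0 t1 \<open>0 \<le> C\<close> M unfolding \<Lambda>_def by auto
  show False
    by (rule barrier_no_interior_min[OF \<psi>_def usup Zp HC drift _ _ _ _ \<theta>(1) _ ys])
      (use b \<epsilon>(1) t1 ys \<theta>(2)[of s] in \<open>auto simp: \<Lambda>_def\<close>)
qed

lemma supersolution_ge_inf:
  fixes H :: "real^'n \<Rightarrow> real^'n^'n \<Rightarrow> real" and u :: "real^'n \<Rightarrow> real \<Rightarrow> real"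
  assumes Hc: "H_cont H" and A: "condA H" and B: "condB H k1" and k1: "0 < k1"
    and hb: "bdd_below (range h)" and Zp: "\<forall>r. Z r \<ge> 0"
    and ulsc: "lsc_on {(x, t). 0 \<le> t \<and> t < T} u" and usup: "visc_super H Z c \<sigma> T u"
    and uinit: "\<forall>x. u x 0 \<ge> h x" and growth: "neg_part_little_o u z T b"
    and b: "0 < b" "b * k1 \<le> k1 + 2"
    and \<sigma>: "0 < \<sigma>" "\<sigma> * (b - 1) \<le> b"
    and K: "0 \<le> K" and cK: "\<And>s. 0 < s \<Longrightarrow> s < T \<Longrightarrow> \<bar>c s\<bar> \<le> K"
    and t0: "0 < t0" "t0 < T"
  shows "(INF y. h y) \<le> u x0 t0"
proof (rule field_le_epsilon)
  note lower_bound = supersolution_ge_inf_minus_drift[OF Hc A B k1 hb Zp ulsc usup uinit growth b]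
  fix \<epsilon> :: real assume "0 < \<epsilon>"
  define e where "e = \<epsilon> / (K * t0 + 1)"
  have pos: "0 < K * t0 + 1" using K t0 by (simp add: add_nonneg_pos)
  have "K * e * t0 = \<epsilon> * (K * t0 / (K * t0 + 1))" unfolding e_def by simp
  also have "\<dots> \<le> \<epsilon> * 1"
    using pos \<open>0 < \<epsilon>\<close> by (intro mult_left_mono) auto
  finally have e: "0 < e" "K * e * t0 \<le> \<epsilon>"
    unfolding e_def using \<open>0 < \<epsilon>\<close> pos by simp_all
  show "(INF y. h y) \<le> u x0 t0 + \<epsilon>"
  proof (cases "\<sigma> \<le> 1")
    case True
    then have "(INF y. h y) - K * e * t0 \<le> u x0 t0"
      using lower_bound[OF _ _ drift_lower_bound_sublinear[OF \<sigma>(1) True _ K e(1) cK] t0] b K e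
      by (simp add: less_imp_le)
    then show ?thesis using e by linarith
  next
    case False
    then have "(INF y. h y) - 0 * t0 \<le> u x0 t0"
      using lower_bound[OF _ _ drift_lower_bound_superlinear[OF _ \<sigma>(2) _ K cK] t0] b K
      by (simp add: less_imp_le)
    then show ?thesis using \<open>0 < \<epsilon>\<close> by simp
  qed
qed

lemma exponent_conditions_gamma_star:
  fixes k1 \<sigma> \<beta> :: real
  assumes k1: "0 < k1" and \<sigma>: "\<sigma> \<le> (k1 + 2) / 2" and \<beta>: "\<beta> = (k1 + 2) / ((k1 + 2) - 2)"
  shows "0 < \<beta>" "\<beta> * k1 \<le> k1 + 2" "\<sigma> * (\<beta> - 1) \<le> \<beta>"
proof -
  have \<beta>': "\<beta> = (k1 + 2) / k1" using \<beta> by simp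
  show "0 < \<beta>" "\<beta> * k1 \<le> k1 + 2" using k1 \<beta>' by simp_all
  have "\<sigma> * (\<beta> - 1) = (\<sigma> * 2) / k1" unfolding \<beta>' using k1 by (simp add: field_simps)
  also have "\<dots> \<le> (k1 + 2) / k1" using k1 \<sigma> by (intro divide_right_mono) auto
  finally show "\<sigma> * (\<beta> - 1) \<le> \<beta>" using \<beta>' by simp
qed

lemma exponent_conditions_sigma_star:
  fixes k1 \<sigma> \<beta> :: real
  assumes k1: "0 < k1" and \<sigma>: "(k1 + 2) / 2 < \<sigma>" and \<beta>: "\<beta> = \<sigma> / (\<sigma> - 1)"
  shows "0 < \<beta>" "\<beta> * k1 \<le> k1 + 2" "\<sigma> * (\<beta> - 1) \<le> \<beta>"
proof -
  have "0 < \<sigma> - 1" using k1 \<sigma> by simp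
  then show "0 < \<beta>" "\<sigma> * (\<beta> - 1) \<le> \<beta>"
    unfolding \<beta> by (simp_all add: field_simps)
  have "\<sigma> * k1 \<le> (k1 + 2) * (\<sigma> - 1)" using \<sigma> by (simp add: algebra_simps)
  then show "\<beta> * k1 \<le> k1 + 2"
    unfolding \<beta> using \<open>0 < \<sigma> - 1\<close> by (simp add: pos_divide_le_eq mult.commute)
qed

lemma abs_le_SUP_abs:
  fixes c :: "'a \<Rightarrow> real"
  assumes "bounded (c ` S)" "s \<in> S"
  shows "\<bar>c s\<bar> \<le> (SUP s\<in>S. \<bar>c s\<bar>)"
proof -
  obtain B where "\<forall>x\<in>c ` S. norm x \<le> B" using assms(1) unfolding bounded_iff by blast
  then have "bdd_above ((\<lambda>s. \<bar>c s\<bar>) ` S)" by (intro bdd_aboveI[of _ B]) auto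
  then show ?thesis using assms(2) by (rule cSUP_upper2) simp
qed

theorem theorem2p7:
  fixes H :: "real^'n \<Rightarrow> real^'n^'n \<Rightarrow> real"
    and k1 T \<sigma> \<beta> :: real
    and h :: "real^'n \<Rightarrow> real"
    and c Z :: "real \<Rightarrow> real"
    and u :: "real^'n \<Rightarrow> real \<Rightarrow> real"
    and z :: "real^'n"
  assumes n2: "CARD('n) \<ge> 2"
    and Hc: "H_cont H" and A: "condA H" and B: "condB H k1" and C: "condC H"
    and k: "k1 + 1 > 1"
    and T: "0 < T"
    and hc: "continuous_on UNIV h" and hb: "bdd_below (range h)"
    and cc: "continuous_on {0<..<T} c" and cb: "bounded (c ` {0<..<T})"
    and \<sigma>: "\<sigma> \<ge> 0"
    and Zp: "\<forall>r. Z r \<ge> 0" and Zm: "antimono Z" and Zc: "continuous_on UNIV Z"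
    and ulsc: "lsc_on {(x, t). 0 \<le> t \<and> t < T} u"
    and usup: "visc_super H Z c \<sigma> T u"
    and uinit: "\<forall>x. u x 0 \<ge> h x"
    and growth: "neg_part_little_o u z T \<beta>"
  shows "(\<sigma> \<le> (k1 + 2) / 2 \<and> \<beta> = (k1 + 2) / ((k1 + 2) - 2) \<longrightarrow>
            (\<forall>x t. 0 < t \<and> t < T \<longrightarrow>
               (\<sigma> = 0 \<longrightarrow> u x t \<ge> (INF y. h y) - t * (SUP s\<in>{0<..<T}. \<bar>c s\<bar>)) \<and>
               (0 < \<sigma> \<longrightarrow> u x t \<ge> (INF y. h y))))
       \<and> (\<sigma> > (k1 + 2) / 2 \<and> \<beta> = \<sigma> / (\<sigma> - 1) \<longrightarrow>
            (\<forall>x t. 0 < t \<and> t < T \<longrightarrow> u x t \<ge> (INF y. h y)))"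
proof -
  have k1: "0 < k1" using k by simp
  define K where "K = (SUP s\<in>{0<..<T}. \<bar>c s\<bar>)"
  have cK: "\<And>s. 0 < s \<Longrightarrow> s < T \<Longrightarrow> \<bar>c s\<bar> \<le> K"
    unfolding K_def using abs_le_SUP_abs[OF cb] by simp
  have K: "0 \<le> K" using cK[of "T/2"] T by simp
  note lower_bound = supersolution_ge_inf_minus_drift[OF Hc A B k1 hb Zp ulsc usup uinit growth]
  note lower_bound_pos = supersolution_ge_inf[OF Hc A B k1 hb Zp ulsc usup uinit growth _ _ _ _ K cK]
  show ?thesis
  proof (intro conjI impI allI)
    fix x t assume a: "\<sigma> \<le> (k1 + 2) / 2 \<and> \<beta> = (k1 + 2) / ((k1 + 2) - 2)" and t: "0 < t \<and> t < T"
      and "\<sigma> = 0"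
    have "drift_lower_bound c \<sigma> T \<beta> K 0"
      using drift_lower_bound_sigma_zero[where c = c and T = T, OF cK] \<open>\<sigma> = 0\<close> by simp
    moreover have "0 < \<beta>" "\<beta> * k1 \<le> k1 + 2"
      using exponent_conditions_gamma_star[OF k1] a by auto
    ultimately have "(INF y. h y) - K * t \<le> u x t"
      using lower_bound[OF _ _ K order_refl] t by blast
    then show "(INF y. h y) - t * (SUP s\<in>{0<..<T}. \<bar>c s\<bar>) \<le> u x t"
      unfolding K_def by (simp add: mult.commute)
  next
    fix x t assume a: "\<sigma> \<le> (k1 + 2) / 2 \<and> \<beta> = (k1 + 2) / ((k1 + 2) - 2)" and t: "0 < t \<and> t < T"
      and "0 < \<sigma>"
    then show "(INF y. h y) \<le> u x t"
      using lower_bound_pos exponent_conditions_gamma_star[OF k1 conjunct1[OF a] conjunct2[OF a]] by blast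
  next
    fix x t assume a: "(k1 + 2) / 2 < \<sigma> \<and> \<beta> = \<sigma> / (\<sigma> - 1)" and t: "0 < t \<and> t < T"
    moreover have "0 < \<sigma>" using k1 conjunct1[OF a] by (simp add: field_simps)
    ultimately show "(INF y. h y) \<le> u x t"
      using lower_bound_pos exponent_conditions_sigma_star[OF k1 conjunct1[OF a] conjunct2[OF a]] by blast
  qed
qed

end
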